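(* Let $T\ge1$, $n\ge1$ with $nT\ge2$, $\mu\in\mathbb{R}$, $\sigma>0$, $z^*\in\mathbb{R}$, $\tau\in\{1,\dots,T\}$. Under $\mathbf{H_0}$ the real numbers $X_{t,k}$ ($t\le T$, $k\le n$) are i.i.d. $\mathcal{N}(\mu,\sigma^2)$; under $\mathbf{H_1^\tau}$ they are generated the same way and then $X_{\tau,J}$ is replaced by $z^*$, with $J$ uniform on $\{1,\dots,n\}$ independent of the data. Let $\hat\mu_T=\frac{1}{nT}\sum_{t=1}^T\sum_{k=1}^nX_{t,k}$, $W=\hat\mu_T-\mu$, and define the final-observation statistic \[ L_{\mathrm{FO}}=-\frac12\log\Big(\frac{nT-1}{nT}\Big)-\frac{nT}{2(nT-1)\sigma^2}W^2+\frac{nT(z^*-\mu)}{(nT-1)\sigma^2}W-\frac{(z^*-\mu)^2}{2(nT-1)\sigma^2}. \] Let $\alpha_{\mathrm{FO}}(\gamma)=\mathbb{P}_{\mathbf{H_0}}(L_{\mathrm{FO}}\ge\gamma)$, $\gamma^{(T)}_{\max}=\frac12\big[\frac{(z^*-\mu)^2}{\sigma^2}-\log\big(\frac{nT-1}{nT}\big)\big]$, $m^*=\frac{(z^*-\mu)^2}{\sigma^2}$, $a_T=\sqrt{m^*nT}$, and $b_T(\gamma)=\sqrt{(nT-1)\big(m^*-\log(1-\frac1{nT})-2\gamma\big)}$. Then for every $\gamma\le\gamma^{(T)}_{\max}$, \[ \alpha_{\mathrm{FO}}(\gamma)=\Phi(a_T+b_T(\gamma))-\Phi(a_T-b_T(\gamma)),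 \] where $\Phi$ is the standard normal cumulative distribution function.
   Context: $L_{\mathrm{FO}}$ is the log likelihood ratio statistic of a membership test that only observes the final cumulative mean $\hat\mu_T$; $\alpha_{\mathrm{FO}}(\gamma)$ is its Type I error at threshold $\gamma$. *)

theory Defs
  imports "HOL-Probability.Probability"
begin

definition Phi :: "real \<Rightarrow> real" where
  "Phi x = cdf (density lborel std_normal_density) x"

definition idx :: "nat \<Rightarrow> nat \<Rightarrow> (nat \<times> nat) set" where
  "idx T n = {1..T} \<times> {1..n}"

definition H0_law :: "nat \<Rightarrow> nat \<Rightarrow> real \<Rightarrow> real \<Rightarrow> ((nat \<times> nat) \<Rightarrow> real) measure" where
  "H0_law T n \<mu> \<sigma> = PiM (idx T n) (\<lambda>_. density lborel (normal_density \<mu> \<sigma>))"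

definition mu_hat :: "nat \<Rightarrow> nat \<Rightarrow> ((nat \<times> nat) \<Rightarrow> real) \<Rightarrow> real" where
  "mu_hat T n X = (1 / (real n * real T)) * (\<Sum>t=1..T. \<Sum>k=1..n. X (t, k))"

definition L_FO :: "nat \<Rightarrow> nat \<Rightarrow> real \<Rightarrow> real \<Rightarrow> real \<Rightarrow> ((nat \<times> nat) \<Rightarrow> real) \<Rightarrow> real" where
  "L_FO T n \<mu> \<sigma> zs X =
    (let N = real n * real T; W = mu_hat T n X - \<mu> in
      - (1/2) * ln ((N - 1) / N)
      - N / (2 * (N - 1) * \<sigma>\<^sup>2) * W\<^sup>2
      + N * (zs - \<mu>) / ((N - 1) * \<sigma>\<^sup>2) * W
      - (zs - \<mu>)\<^sup>2 / (2 * (N - 1) * \<sigma>\<^sup>2))"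

definition alpha_FO :: "nat \<Rightarrow> nat \<Rightarrow> real \<Rightarrow> real \<Rightarrow> real \<Rightarrow> real \<Rightarrow> real" where
  "alpha_FO T n \<mu> \<sigma> zs \<gamma> =
    measure (H0_law T n \<mu> \<sigma>) {X \<in> space (H0_law T n \<mu> \<sigma>). L_FO T n \<mu> \<sigma> zs X \<ge> \<gamma>}"

end

theory Submission
  imports Defs
begin

text \<open>
  Completing the square shows that the statistic sees the data only through the distance of the
  final mean from \<open>z\<^sup>*\<close>:
  \<open>L_FO = \<gamma>\<^sub>m\<^sub>a\<^sub>x - nT (mu_hat - z\<^sup>*)\<^sup>2 / (2 (nT - 1) \<sigma>\<^sup>2)\<close>.
  Hence \<open>L_FO \<ge> \<gamma>\<close> is the event \<open>\<bar>Z - c\<bar> \<le> b\<^sub>T(\<gamma>)\<close> for the standardized mean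
  \<open>Z = \<surd>(nT) (mu_hat - \<mu>) / \<sigma>\<close> and \<open>c = \<surd>(nT) (z\<^sup>* - \<mu>) / \<sigma>\<close>, where \<open>\<bar>c\<bar> = a\<^sub>T\<close>.
  Under \<open>H\<^sub>0\<close> the sum of the \<open>nT\<close> independent normal coordinates is normal, so \<open>Z\<close> is
  standard normal, and by the symmetry of \<open>Z\<close> the event has probability
  \<open>\<Phi>(\<bar>c\<bar> + b) - \<Phi>(\<bar>c\<bar> - b)\<close>.
\<close>

lemma measure_density_lborel_Icc:
  assumes "real_distribution (density lborel f)" and "f \<in> borel_measurable borel" and "u \<le> v"
  shows "measure (density lborel f) {u..v} = cdf (density lborel f) v - cdf (density lborel f) u"
proof -
  interpret real_distribution "density lborel f" by fact
  have "{u} \<in> null_sets (density lborel f)"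
    using assms(2) by (simp add: null_sets_def emeasure_density)
  then have "measure (density lborel f) ({u<..v} \<union> {u}) = measure (density lborel f) {u<..v}"
    by (intro measure_Un_null_set) auto
  moreover have "{u..v} = {u<..v} \<union> {u}"
    using \<open>u \<le> v\<close> by auto
  ultimately show ?thesis
    using \<open>u \<le> v\<close> by (cases "u = v") (simp_all add: cdf_diff_eq)
qed

lemma measure_std_normal_abs_le:
  assumes "prob_space M" and Z: "distributed M lborel Z std_normal_density" and "b \<ge> 0"
  shows "measure M {x \<in> space M. \<bar>Z x - c\<bar> \<le> b} = Phi (\<bar>c\<bar> + b) - Phi (\<bar>c\<bar> - b)"
proof -
  interpret prob_space M by fact
  have interval: "measure M {x \<in> space M. \<bar>Y x - c'\<bar> \<le> b} = Phi (c' + b) - Phi (c' - b)"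
    if Y: "distributed M lborel Y std_normal_density" for Y c'
  proof -
    have "measure M {x \<in> space M. \<bar>Y x - c'\<bar> \<le> b} = measure M (Y -` {c' - b..c' + b} \<inter> space M)"
      by (rule arg_cong[where f = "measure M"]) auto
    also have "\<dots> = measure (distr M lborel Y) {c' - b..c' + b}"
      using Y by (intro measure_distr[symmetric]) (auto simp: distributed_def)
    also have "\<dots> = Phi (c' + b) - Phi (c' - b)"
      using Y \<open>b \<ge> 0\<close> unfolding Phi_def
      by (simp add: distributed_def measure_density_lborel_Icc real_dist_normal_dist)
    finally show ?thesis .
  qed
  have "distributed M lborel (\<lambda>x. 0 + (-1) * Z x) (normal_density (0 + (-1) * 0) (\<bar>-1\<bar> * 1))"
    by (rule normal_density_affine[OF Z]) auto
  then have minus_Z: "distributed M lborel (\<lambda>x. - Z x) std_normal_density"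
    by simp
  show ?thesis
  proof (cases "c \<ge> 0")
    case True
    then show ?thesis using interval[OF Z, of c] by simp
  next
    case False
    have "\<bar>Z x - c\<bar> = \<bar>- Z x - (- c)\<bar>" for x by linarith
    then show ?thesis using interval[OF minus_Z, of "- c"] False by simp
  qed
qed

lemma indep_vars_PiM_components:
  assumes M: "\<And>i. i \<in> I \<Longrightarrow> prob_space (M i)" and "I \<noteq> {}"
  shows "prob_space.indep_vars (PiM I M) M (\<lambda>i x. x i) I"
proof -
  interpret prob_space "PiM I M" by (rule prob_space_PiM) (rule M)
  have "distr (PiM I M) (PiM I M) (\<lambda>x. restrict x I) = PiM I M"
    by (subst distr_cong[of _ _ _ _ _ "\<lambda>x. x"]) (auto simp: space_PiM)
  also have "\<dots> = (\<Pi>\<^sub>M i\<in>I. distr (PiM I M) (M i) (\<lambda>x. x i))"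
    by (rule PiM_cong) (auto simp: distr_PiM_component M)
  finally show ?thesis
    by (subst indep_vars_iff_distr_eq_PiM') (use assms in auto)
qed

lemma distributed_PiM_sum_normal:
  fixes I :: "'i set" and \<mu> \<sigma> :: real
  assumes "finite I" and "I \<noteq> {}" and "\<sigma> > 0"
  shows "distributed (PiM I (\<lambda>_. density lborel (normal_density \<mu> \<sigma>))) lborel
           (\<lambda>x. \<Sum>i\<in>I. x i) (normal_density (real (card I) * \<mu>) (sqrt (real (card I)) * \<sigma>))"
proof -
  let ?N = "density lborel (normal_density \<mu> \<sigma>)"
  have N: "prob_space ?N"
    using \<open>\<sigma> > 0\<close> by (rule prob_space_normal_density)
  interpret prob_space "PiM I (\<lambda>_. ?N)"
    by (rule prob_space_PiM) (rule N)
  have "indep_vars (\<lambda>_. ?N) (\<lambda>i x. x i) I"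
    using indep_vars_PiM_components[of I "\<lambda>_. ?N"] N assms by auto
  then have indep: "indep_vars (\<lambda>_. borel) (\<lambda>i x. x i) I"
    by (simp add: indep_vars_def2 measurable_def)
  have "distributed (PiM I (\<lambda>_. ?N)) lborel (\<lambda>x. x i) (normal_density \<mu> \<sigma>)" if "i \<in> I" for i
    unfolding distributed_def using distr_PiM_component[of I "\<lambda>_. ?N" i] N that
    by (auto cong: distr_cong simp: measurable_cong_sets[OF _ sets_lborel])
  from sum_indep_normal[OF assms(1,2) indep _ this]
  show ?thesis
    using \<open>\<sigma> > 0\<close> by (simp add: real_sqrt_mult mult.commute)
qed

lemma prob_space_H0_law:
  assumes "\<sigma> > 0"
  shows "prob_space (H0_law T n \<mu> \<sigma>)"
  unfolding H0_law_def using assms by (intro prob_space_PiM prob_space_normal_density)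

lemma distributed_H0_standardized_mean:
  assumes "T \<ge> 1" and "n \<ge> 1" and "\<sigma> > 0"
  defines "N \<equiv> real n * real T"
  shows "distributed (H0_law T n \<mu> \<sigma>) lborel (\<lambda>X. sqrt N * (mu_hat T n X - \<mu>) / \<sigma>)
           std_normal_density"
proof -
  interpret prob_space "H0_law T n \<mu> \<sigma>"
    using \<open>\<sigma> > 0\<close> by (rule prob_space_H0_law)
  have card: "real (card (idx T n)) = N"
    unfolding idx_def N_def by (simp add: card_cartesian_product)
  have "N > 0"
    using assms unfolding N_def by simp
  then have "sqrt N * \<sigma> > 0"
    using \<open>\<sigma> > 0\<close> by simp
  have "distributed (H0_law T n \<mu> \<sigma>) lborel (\<lambda>X. \<Sum>i\<in>idx T n. X i)
          (normal_density (N * \<mu>) (sqrt N * \<sigma>))"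
  proof -
    have "finite (idx T n)" and "idx T n \<noteq> {}"
      using assms(1,2) unfolding idx_def by auto
    from distributed_PiM_sum_normal[OF this \<open>\<sigma> > 0\<close>, of \<mu>]
    show ?thesis unfolding H0_law_def card .
  qed
  then have "distributed (H0_law T n \<mu> \<sigma>) lborel
               (\<lambda>X. ((\<Sum>i\<in>idx T n. X i) - N * \<mu>) / (sqrt N * \<sigma>)) std_normal_density"
    unfolding normal_standard_normal_convert[OF \<open>sqrt N * \<sigma> > 0\<close>] .
  moreover have "((\<Sum>i\<in>idx T n. X i) - N * \<mu>) / (sqrt N * \<sigma>) = sqrt N * (mu_hat T n X - \<mu>) / \<sigma>"
    for X
  proof -
    have "mu_hat T n X = (\<Sum>i\<in>idx T n. X i) / N"
      unfolding mu_hat_def idx_def N_def by (simp add: sum.cartesian_product)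
    moreover have "sqrt N * ((\<Sum>i\<in>idx T n. X i) / N - \<mu>) = ((\<Sum>i\<in>idx T n. X i) - N * \<mu>) / sqrt N"
      using \<open>N > 0\<close> by (simp add: field_simps)
    ultimately show ?thesis
      by simp
  qed
  ultimately show ?thesis
    by simp
qed

lemma L_FO_completed_square:
  assumes "n * T \<noteq> 1" and "\<sigma> \<noteq> 0"
  shows "L_FO T n \<mu> \<sigma> zs X =
    (1/2) * ((zs - \<mu>)\<^sup>2 / \<sigma>\<^sup>2 - ln ((real n * real T - 1) / (real n * real T)))
    - real n * real T * (mu_hat T n X - zs)\<^sup>2 / (2 * (real n * real T - 1) * \<sigma>\<^sup>2)"
proof -
  define D where "D = real n * real T - 1"
  have "D \<noteq> 0"
    using assms(1) unfolding D_def by (metis of_nat_1 of_nat_mult right_minus_eq of_nat_eq_iff)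
  moreover have "real n * real T = D + 1"
    unfolding D_def by simp
  ultimately show ?thesis
    using assms(2) unfolding L_FO_def Let_def by (simp add: field_simps power2_eq_square)
qed

lemma L_FO_ge_iff:
  assumes "n * T \<ge> 2" and "\<sigma> > 0"
  defines "N \<equiv> real n * real T"
  shows "\<gamma> \<le> L_FO T n \<mu> \<sigma> zs X \<longleftrightarrow>
    \<bar>sqrt N * (mu_hat T n X - \<mu>) / \<sigma> - sqrt N * (zs - \<mu>) / \<sigma>\<bar>
      \<le> sqrt ((N - 1) * ((zs - \<mu>)\<^sup>2 / \<sigma>\<^sup>2 - ln (1 - 1 / N) - 2 * \<gamma>))"
proof -
  have "N > 1"
  proof -
    have "real (n * T) \<ge> 2" using assms(1) by linarith
    then show ?thesis unfolding N_def by simp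
  qed
  define Q where "Q = N * (mu_hat T n X - zs)\<^sup>2 / \<sigma>\<^sup>2"
  define g where "g = (1/2) * ((zs - \<mu>)\<^sup>2 / \<sigma>\<^sup>2 - ln (1 - 1 / N))"
  have "ln (1 - 1 / N) = ln ((N - 1) / N)"
    using \<open>N > 1\<close> by (simp add: diff_divide_distrib)
  moreover have "n * T \<noteq> 1" and "\<sigma> \<noteq> 0"
    using assms(1,2) by auto
  ultimately have "L_FO T n \<mu> \<sigma> zs X = g - Q / (2 * (N - 1))"
    unfolding L_FO_completed_square[OF \<open>n * T \<noteq> 1\<close> \<open>\<sigma> \<noteq> 0\<close>] g_def Q_def N_def
    by (simp add: ac_simps)
  then have "\<gamma> \<le> L_FO T n \<mu> \<sigma> zs X \<longleftrightarrow> Q / (2 * (N - 1)) \<le> g - \<gamma>"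
    by linarith
  also have "\<dots> \<longleftrightarrow> Q \<le> 2 * (N - 1) * (g - \<gamma>)"
    using \<open>N > 1\<close> by (simp add: pos_divide_le_eq mult.commute)
  also have "Q = (sqrt N * (mu_hat T n X - \<mu>) / \<sigma> - sqrt N * (zs - \<mu>) / \<sigma>)\<^sup>2"
    using \<open>N > 1\<close> unfolding Q_def
    by (simp add: power_divide power_mult_distrib diff_divide_distrib[symmetric]
        right_diff_distrib[symmetric])
  also have "2 * (N - 1) * (g - \<gamma>) = (N - 1) * ((zs - \<mu>)\<^sup>2 / \<sigma>\<^sup>2 - ln (1 - 1 / N) - 2 * \<gamma>)"
    unfolding g_def by (simp add: field_simps)
  finally show ?thesis
    by (metis real_sqrt_abs real_sqrt_le_iff)
qed

theorem lemma3p7: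
  fixes T n :: nat and \<mu> \<sigma> zs \<gamma> :: real
  assumes "T \<ge> 1" and "n \<ge> 1" and "n * T \<ge> 2" and "\<sigma> > 0"
    and "\<gamma> \<le> (1/2) * ((zs - \<mu>)\<^sup>2 / \<sigma>\<^sup>2 - ln ((real n * real T - 1) / (real n * real T)))"
  shows "let m = (zs - \<mu>)\<^sup>2 / \<sigma>\<^sup>2;
             N = real n * real T;
             a = sqrt (m * N);
             b = sqrt ((N - 1) * (m - ln (1 - 1 / N) - 2 * \<gamma>))
         in alpha_FO T n \<mu> \<sigma> zs \<gamma> = Phi (a + b) - Phi (a - b)"
proof -
  define N where "N = real n * real T"
  define c where "c = sqrt N * (zs - \<mu>) / \<sigma>"
  define b where "b = sqrt ((N - 1) * ((zs - \<mu>)\<^sup>2 / \<sigma>\<^sup>2 - ln (1 - 1 / N) - 2 * \<gamma>))"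
  have "N > 1"
  proof -
    have "real (n * T) \<ge> 2" using assms(3) by linarith
    then show ?thesis unfolding N_def by simp
  qed
  then have "ln (1 - 1 / N) = ln ((N - 1) / N)"
    by (simp add: diff_divide_distrib)
  then have "b \<ge> 0"
    using assms(5)[folded N_def] \<open>N > 1\<close> unfolding b_def by simp
  have "{X \<in> space (H0_law T n \<mu> \<sigma>). \<gamma> \<le> L_FO T n \<mu> \<sigma> zs X}
      = {X \<in> space (H0_law T n \<mu> \<sigma>). \<bar>sqrt N * (mu_hat T n X - \<mu>) / \<sigma> - c\<bar> \<le> b}"
    using L_FO_ge_iff[OF assms(3,4)] unfolding c_def b_def N_def by simp
  then have "alpha_FO T n \<mu> \<sigma> zs \<gamma> = Phi (\<bar>c\<bar> + b) - Phi (\<bar>c\<bar> - b)"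
    unfolding alpha_FO_def
    using measure_std_normal_abs_le[OF prob_space_H0_law distributed_H0_standardized_mean \<open>b \<ge> 0\<close>]
      assms unfolding N_def by simp
  moreover have "sqrt ((zs - \<mu>)\<^sup>2 / \<sigma>\<^sup>2 * N) = \<bar>c\<bar>"
    unfolding c_def using \<open>\<sigma> > 0\<close> \<open>N > 1\<close>
    by (simp add: real_sqrt_mult real_sqrt_divide abs_mult)
  ultimately show ?thesis
    unfolding Let_def N_def[symmetric] b_def[symmetric] by simp
qed

end
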